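(* Let $\|\cdot\|$ be a norm on $\mathbb{R}^d$, $\mathcal{X}\subseteq\mathbb{R}^d$ with $B=\sup_{x\in\mathcal{X}}\|x\|<\infty$, and $\gamma>0$. There is an online learner such that for every sequence $(x_1,y_1),\dots,(x_T,y_T)\in\mathcal{X}\times\{-1,+1\}$, $$\sum_{t=1}^T\mathbb{E}\,\mathbb{1}[\hat y_t\neq y_t]-\min_{w\in\mathbb{R}^d,\ \|w\|_\star=1}\sum_{t=1}^T\mathbb{1}[y_t\langle w,x_t\rangle\le\gamma]\le\sqrt{T\cdot d\ln\!\left(1+\frac{2B}{\gamma}\right)}.$$
   Context: Online binary classification: on rounds $t=1,\dots,T$ the adversary reveals $x_t\in\mathcal{X}$, the (possibly randomized) learner outputs $\hat y_t\in\{-1,+1\}$, then $y_t\in\{-1,+1\}$ is revealed; the expectation is over the learner's randomness. $\|w\|_\star=\sup_{\|x\|\le1}\langle w,x\rangle$ is the dual norm. *)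

theory Defs
  imports "HOL-Analysis.Analysis"
begin

definition is_norm :: "('a::real_vector \<Rightarrow> real) \<Rightarrow> bool" where
  "is_norm N \<longleftrightarrow>
     (\<forall>x. 0 \<le> N x) \<and> (\<forall>x. N x = 0 \<longleftrightarrow> x = 0) \<and>
     (\<forall>c x. N (c *\<^sub>R x) = \<bar>c\<bar> * N x) \<and> (\<forall>x y. N (x + y) \<le> N x + N y)"

definition dual_norm :: "('a::real_inner \<Rightarrow> real) \<Rightarrow> 'a \<Rightarrow> real" where
  "dual_norm N w = Sup {inner w x | x. N x \<le> 1}"

text \<open>A randomized online learner is represented by the probability q h x \<in> [0,1]
  that it predicts +1 on instance x after history h (list of past (x_s, y_s)).\<close>
definition expected_mistakes ::
  "(('a \<times> real) list \<Rightarrow> 'a \<Rightarrow> real) \<Rightarrow> nat \<Rightarrow> (nat \<Rightarrow> 'a) \<Rightarrow> (nat \<Rightarrow> real) \<Rightarrow> real" where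
  "expected_mistakes q T x y =
     (\<Sum>t<T. let p = q (map (\<lambda>s. (x s, y s)) [0..<t]) (x t)
            in if y t = 1 then 1 - p else p)"

definition margin_errors :: "real \<Rightarrow> nat \<Rightarrow> (nat \<Rightarrow> 'a::real_inner) \<Rightarrow> (nat \<Rightarrow> real) \<Rightarrow> 'a \<Rightarrow> nat" where
  "margin_errors \<gamma> T x y w = card {t. t < T \<and> y t * inner w (x t) \<le> \<gamma>}"

end

theory Submission
  imports Defs "HOL-Probability.Hoeffding"
begin

text \<open>The dual unit ball has a \<open>\<gamma>/B\<close>-net \<open>C\<close> (in the dual norm) of size at most
  \<open>(1 + 2B/\<gamma>)^d\<close>, by the volume argument for separated sets. Each \<open>c \<in> C\<close> is an expert
  predicting the sign of \<open>\<langle>c, x\<rangle>\<close>; if \<open>c\<close> is \<open>\<gamma>/B\<close>-close to a comparator \<open>w\<close> then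
  \<open>|\<langle>w - c, x\<rangle>| \<le> \<gamma>\<close> on the instances, so \<open>c\<close> errs only on rounds where \<open>w\<close> has margin at most
  \<open>\<gamma>\<close>. Running Hedge (exponential weights) over \<open>C\<close> costs \<open>ln |C| / \<eta> + \<eta> T / 8\<close> over the
  best expert, and a tuned \<open>\<eta>\<close> turns this into \<open>sqrt (T d ln (1 + 2B/\<gamma>))\<close>.\<close>

section \<open>Norms on Euclidean spaces and their duals\<close>

lemma is_normD:
  assumes "is_norm N"
  shows "0 \<le> N x" and "N x = 0 \<longleftrightarrow> x = 0" and "N (c *\<^sub>R x) = \<bar>c\<bar> * N x"
    and "N (x + y) \<le> N x + N y"
  using assms unfolding is_norm_def by auto

lemma is_norm_zero: "is_norm N \<Longrightarrow> N 0 = 0"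
  by (simp add: is_normD(2))

lemma is_norm_pos: "is_norm N \<Longrightarrow> x \<noteq> 0 \<Longrightarrow> 0 < N x"
  using is_normD(1,2) by (metis order_le_less)

lemma is_norm_minus: "is_norm N \<Longrightarrow> N (- x) = N x"
  using is_normD(3)[of N "-1" x] by simp

lemma is_norm_commute: "is_norm N \<Longrightarrow> N (x - y) = N (y - x)"
  using is_norm_minus[of N "y - x"] by simp

lemma is_norm_triangle_diff: "is_norm N \<Longrightarrow> N x \<le> N (x - y) + N y"
  using is_normD(4)[of N "x - y" y] by simp

lemma is_norm_sum_le:
  assumes "is_norm N"
  shows "N (\<Sum>i\<in>I. f i) \<le> (\<Sum>i\<in>I. N (f i))"
proof (induction I rule: infinite_finite_induct)
  case (insert a I)
  then show ?case using is_normD(4)[OF assms, of "f a" "sum f I"] by simp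
qed (simp_all add: is_norm_zero[OF assms])

lemma is_norm_le_mult_norm:
  fixes N :: "'a::euclidean_space \<Rightarrow> real"
  assumes "is_norm N"
  obtains c where "0 < c" and "\<And>x. N x \<le> c * norm x"
proof
  define c where "c = (\<Sum>b\<in>Basis. N b) + 1"
  show "0 < c"
    unfolding c_def using is_normD(1)[OF assms] by (simp add: add_nonneg_pos sum_nonneg)
  fix x
  have "N x = N (\<Sum>b\<in>Basis. inner x b *\<^sub>R b)" by (simp add: euclidean_representation)
  also have "\<dots> \<le> (\<Sum>b\<in>Basis. N (inner x b *\<^sub>R b))" by (rule is_norm_sum_le[OF assms])
  also have "\<dots> = (\<Sum>b\<in>Basis. \<bar>inner x b\<bar> * N b)" by (simp add: is_normD(3)[OF assms])
  also have "\<dots> \<le> (\<Sum>b\<in>Basis. norm x * N b)"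
    by (intro sum_mono mult_right_mono Basis_le_norm is_normD(1)[OF assms])
  also have "\<dots> \<le> c * norm x"
    unfolding c_def by (simp add: sum_distrib_left algebra_simps)
  finally show "N x \<le> c * norm x" .
qed

lemma continuous_on_is_norm:
  fixes N :: "'a::euclidean_space \<Rightarrow> real"
  assumes "is_norm N"
  shows "continuous_on S N"
proof -
  obtain c where c: "0 < c" "\<And>x. N x \<le> c * norm x"
    using is_norm_le_mult_norm[OF assms] by blast
  have "dist (N x') (N x) \<le> c * dist x' x" for x x'
    using is_norm_triangle_diff[OF assms, of x x'] is_norm_triangle_diff[OF assms, of x' x]
      is_norm_commute[OF assms, of x x'] c(2)[of "x' - x"]
    by (simp add: dist_real_def dist_norm)
  then have "c-lipschitz_on S N"
    using c(1) by (intro lipschitz_onI) auto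
  then show ?thesis
    by (rule lipschitz_on_continuous_on)
qed

lemma is_norm_ge_mult_norm:
  fixes N :: "'a::euclidean_space \<Rightarrow> real"
  assumes "is_norm N"
  obtains c where "0 < c" and "\<And>x. c * norm x \<le> N x"
proof -
  have "sphere (0::'a) 1 \<noteq> {}"
    using norm_Basis[OF SOME_Basis] by (metis dist_0_norm empty_iff mem_sphere)
  then obtain u where u: "u \<in> sphere 0 1" "\<And>v. v \<in> sphere 0 1 \<Longrightarrow> N u \<le> N v"
    using continuous_attains_inf[OF compact_sphere _ continuous_on_is_norm[OF assms]] by blast
  have "N u * norm x \<le> N x" for x
  proof (cases "x = 0")
    case False
    then have "N u \<le> N ((1 / norm x) *\<^sub>R x)" using u(2) by simp
    then show ?thesis using False by (simp add: is_normD(3)[OF assms] field_simps)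
  qed (simp add: is_norm_zero[OF assms])
  moreover have "0 < N u"
    using u(1) by (intro is_norm_pos[OF assms]) auto
  ultimately show ?thesis using that by blast
qed

lemma is_norm_exists_unit:
  fixes N :: "'a::euclidean_space \<Rightarrow> real"
  assumes "is_norm N"
  obtains w where "N w = 1"
proof -
  obtain b :: 'a where "b \<in> Basis" using SOME_Basis by blast
  then have "0 < N b" by (intro is_norm_pos[OF assms] nonzero_Basis)
  then show ?thesis using that[of "(1 / N b) *\<^sub>R b"] by (simp add: is_normD(3)[OF assms])
qed

lemma bdd_above_dual_norm_set:
  fixes N :: "'a::euclidean_space \<Rightarrow> real"
  assumes "is_norm N"
  shows "bdd_above {inner w x | x. N x \<le> 1}"
proof -
  obtain c where c: "0 < c" "\<And>x. c * norm x \<le> N x"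
    using is_norm_ge_mult_norm[OF assms] by blast
  have "inner w x \<le> norm w / c" if "N x \<le> 1" for x
  proof -
    have "c * norm x \<le> 1" using c(2)[of x] that by linarith
    then have "norm x \<le> 1 / c" using c(1) by (simp add: field_simps)
    then have "norm w * norm x \<le> norm w * (1 / c)" by (rule mult_left_mono) simp
    then show ?thesis using norm_cauchy_schwarz[of w x] by simp
  qed
  then show ?thesis unfolding bdd_above_def by blast
qed

lemma inner_le_dual_norm:
  fixes N :: "'a::euclidean_space \<Rightarrow> real"
  assumes "is_norm N" and "N x \<le> 1"
  shows "inner w x \<le> dual_norm N w"
  unfolding dual_norm_def
  by (rule cSup_upper[OF _ bdd_above_dual_norm_set[OF assms(1)]]) (use assms(2) in blast)

lemma dual_norm_le:
  fixes N :: "'a::euclidean_space \<Rightarrow> real"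
  assumes "is_norm N" and "\<And>x. N x \<le> 1 \<Longrightarrow> inner w x \<le> M"
  shows "dual_norm N w \<le> M"
  unfolding dual_norm_def
proof (rule cSup_least)
  have "inner w 0 \<in> {inner w x |x. N x \<le> 1}"
    using is_norm_zero[OF assms(1)] by fastforce
  then show "{inner w x |x. N x \<le> 1} \<noteq> {}" by blast
qed (use assms(2) in blast)

lemma inner_le_dual_norm_mult:
  fixes N :: "'a::euclidean_space \<Rightarrow> real"
  assumes "is_norm N"
  shows "inner w x \<le> dual_norm N w * N x"
proof (cases "x = 0")
  case False
  then have "0 < N x" by (rule is_norm_pos[OF assms])
  then have "inner w ((1 / N x) *\<^sub>R x) \<le> dual_norm N w"
    by (intro inner_le_dual_norm[OF assms]) (simp add: is_normD(3)[OF assms])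
  with \<open>0 < N x\<close> show ?thesis by (simp add: pos_divide_le_eq)
qed (simp add: is_norm_zero[OF assms])

lemma abs_inner_le_dual_norm_mult:
  fixes N :: "'a::euclidean_space \<Rightarrow> real"
  assumes "is_norm N"
  shows "\<bar>inner w x\<bar> \<le> dual_norm N w * N x"
  using inner_le_dual_norm_mult[OF assms, of w x] inner_le_dual_norm_mult[OF assms, of w "- x"]
    is_norm_minus[OF assms, of x]
  by simp

lemma dual_norm_ge_mult_norm:
  fixes N :: "'a::euclidean_space \<Rightarrow> real"
  assumes N: "is_norm N"
  obtains c where "0 < c" and "\<And>w. c * norm w \<le> dual_norm N w"
proof -
  obtain c where c: "0 < c" "\<And>x. N x \<le> c * norm x"
    using is_norm_le_mult_norm[OF N] by blast
  have "norm w / c \<le> dual_norm N w" for w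
  proof (cases "w = 0")
    case True
    then show ?thesis using inner_le_dual_norm[OF N, of 0 w] by (simp add: is_norm_zero[OF N])
  next
    case False
    let ?x = "(1 / (c * norm w)) *\<^sub>R w"
    have "N ?x \<le> 1"
      using c(1) c(2)[of w] False by (simp add: is_normD(3)[OF N] field_simps)
    then have "inner w ?x \<le> dual_norm N w" by (rule inner_le_dual_norm[OF N])
    then show ?thesis
      using c(1) False by (simp add: power2_norm_eq_inner[symmetric] power2_eq_square)
  qed
  then show ?thesis
    using that[of "1 / c"] c(1) by simp
qed

lemma dual_norm_scaleR_le:
  fixes N :: "'a::euclidean_space \<Rightarrow> real"
  assumes N: "is_norm N"
  shows "dual_norm N (a *\<^sub>R w) \<le> \<bar>a\<bar> * dual_norm N w"
proof (rule dual_norm_le[OF N])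
  fix x assume "N x \<le> 1"
  then have "N (sgn a *\<^sub>R x) \<le> 1"
    by (simp add: is_normD(3)[OF N] abs_sgn mult_le_one sgn_if)
  then have "inner w (sgn a *\<^sub>R x) \<le> dual_norm N w" by (rule inner_le_dual_norm[OF N])
  then have "\<bar>a\<bar> * inner w (sgn a *\<^sub>R x) \<le> \<bar>a\<bar> * dual_norm N w"
    by (simp add: mult_left_mono)
  then show "inner (a *\<^sub>R w) x \<le> \<bar>a\<bar> * dual_norm N w"
    by (simp add: mult.assoc[symmetric] abs_mult_sgn)
qed

lemma is_norm_dual_norm:
  fixes N :: "'a::euclidean_space \<Rightarrow> real"
  assumes N: "is_norm N"
  shows "is_norm (dual_norm N)"
proof -
  obtain c where c: "0 < c" "\<And>w. c * norm w \<le> dual_norm N w"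
    using dual_norm_ge_mult_norm[OF N] by blast
  have nonneg: "0 \<le> dual_norm N w" for w
    using c(1) c(2)[of w] by (simp add: order_trans[OF mult_nonneg_nonneg[OF less_imp_le norm_ge_zero]])
  have zero: "dual_norm N 0 = 0"
    using nonneg[of 0] by (intro antisym dual_norm_le[OF N]) auto
  have "dual_norm N (a *\<^sub>R w) = \<bar>a\<bar> * dual_norm N w" for a w
  proof (cases "a = 0")
    case False
    have "dual_norm N w \<le> \<bar>inverse a\<bar> * dual_norm N (a *\<^sub>R w)"
      using dual_norm_scaleR_le[OF N, of "inverse a" "a *\<^sub>R w"] False by simp
    with False dual_norm_scaleR_le[OF N, of a w] show ?thesis by (simp add: field_simps abs_inverse)
  qed (simp add: zero)
  moreover have "dual_norm N (v + w) \<le> dual_norm N v + dual_norm N w" for v w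
    using inner_le_dual_norm[OF N]
    by (intro dual_norm_le[OF N]) (simp add: inner_add_left add_mono)
  moreover have "dual_norm N w = 0 \<longleftrightarrow> w = 0" for w
  proof
    assume "dual_norm N w = 0"
    then have "c * norm w \<le> 0" using c(2)[of w] by simp
    with c(1) show "w = 0" by (simp add: mult_le_0_iff)
  qed (simp add: zero)
  ultimately show ?thesis
    unfolding is_norm_def using nonneg by blast
qed

section \<open>Packing and covering in a norm\<close>

definition norm_cball :: "('a::real_vector \<Rightarrow> real) \<Rightarrow> 'a \<Rightarrow> real \<Rightarrow> 'a set" where
  "norm_cball N a r = {v. N (v - a) \<le> r}"

lemma closed_norm_cball:
  fixes N :: "'a::euclidean_space \<Rightarrow> real"
  assumes "is_norm N"
  shows "closed (norm_cball N a r)"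
  unfolding norm_cball_def
  by (intro closed_Collect_le continuous_on_compose2[OF continuous_on_is_norm[OF assms]]
      continuous_intros) auto

lemma bounded_norm_cball:
  fixes N :: "'a::euclidean_space \<Rightarrow> real"
  assumes "is_norm N"
  shows "bounded (norm_cball N a r)"
proof -
  obtain c where c: "0 < c" "\<And>x. c * norm x \<le> N x"
    using is_norm_ge_mult_norm[OF assms] by blast
  have "norm_cball N a r \<subseteq> cball a (r / c)"
  proof
    fix v assume "v \<in> norm_cball N a r"
    then have "c * norm (v - a) \<le> r" using c(2)[of "v - a"] by (simp add: norm_cball_def)
    then show "v \<in> cball a (r / c)"
      using c(1) by (simp add: dist_norm norm_minus_commute field_simps)
  qed
  then show ?thesis using bounded_subset by blast
qed

lemma norm_cball_lmeasurable:
  fixes N :: "'a::euclidean_space \<Rightarrow> real"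
  assumes "is_norm N"
  shows "norm_cball N a r \<in> lmeasurable"
  using closed_norm_cball[OF assms] bounded_norm_cball[OF assms]
  by (intro bounded_set_imp_lmeasurable sets_completionI_sets) simp_all

lemma norm_cball_eq_affine_image:
  fixes N :: "'a::euclidean_space \<Rightarrow> real"
  assumes "is_norm N" and "0 < r"
  shows "norm_cball N a r = (\<lambda>u. r *\<^sub>R u + a) ` norm_cball N 0 1"
proof (intro set_eqI iffI)
  fix v assume "v \<in> norm_cball N a r"
  moreover have "N ((1 / r) *\<^sub>R (v - a)) = N (v - a) / r"
    using assms(2) by (subst is_normD(3)[OF assms(1)]) simp
  ultimately have "(1 / r) *\<^sub>R (v - a) \<in> norm_cball N 0 1"
    using assms(2) by (simp add: norm_cball_def)
  moreover have "v = r *\<^sub>R ((1 / r) *\<^sub>R (v - a)) + a" using assms(2) by simp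
  ultimately show "v \<in> (\<lambda>u. r *\<^sub>R u + a) ` norm_cball N 0 1" by blast
qed (use assms in \<open>auto simp: norm_cball_def is_normD(3)[OF assms(1)] mult_left_le\<close>)

lemma measure_norm_cball:
  fixes N :: "'a::euclidean_space \<Rightarrow> real"
  assumes "is_norm N" and "0 < r"
  shows "measure lebesgue (norm_cball N a r) = r ^ DIM('a) * measure lebesgue (norm_cball N 0 1)"
  using measure_lebesgue_affine[of r a "norm_cball N 0 1"] assms(2)
  by (simp add: norm_cball_eq_affine_image[OF assms])

lemma measure_norm_cball_pos:
  fixes N :: "'a::euclidean_space \<Rightarrow> real"
  assumes "is_norm N"
  shows "0 < measure lebesgue (norm_cball N 0 1)"
proof -
  obtain c where c: "0 < c" "\<And>x. N x \<le> c * norm x"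
    using is_norm_le_mult_norm[OF assms] by blast
  have "cball 0 (1 / c) \<subseteq> norm_cball N 0 1"
  proof
    fix u :: 'a assume "u \<in> cball 0 (1 / c)"
    then have "c * norm u \<le> 1" using c(1) by (simp add: field_simps)
    then show "u \<in> norm_cball N 0 1" using c(2)[of u] by (simp add: norm_cball_def)
  qed
  then have "measure lebesgue (cball (0::'a) (1 / c)) \<le> measure lebesgue (norm_cball N 0 1)"
    by (intro measure_mono_fmeasurable norm_cball_lmeasurable[OF assms] fmeasurableD[OF lmeasurable_cball])
  moreover have "0 < measure lebesgue (cball (0::'a) (1 / c))"
    using c(1) by (simp add: content_cball_pos)
  ultimately show ?thesis by linarith
qed

lemma disjnt_norm_cball:
  assumes "is_norm N" and "r + s < N (a - b)"
  shows "disjnt (norm_cball N a r) (norm_cball N b s)"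
proof -
  have "N (a - b) \<le> r + s" if "v \<in> norm_cball N a r" and "v \<in> norm_cball N b s" for v
    using that is_normD(4)[OF assms(1), of "a - v" "v - b"] is_norm_commute[OF assms(1), of a v]
    by (simp add: norm_cball_def)
  with assms(2) show ?thesis
    unfolding disjnt_def by fastforce
qed

lemma norm_cball_subset:
  assumes "is_norm N" and "N a \<le> s"
  shows "norm_cball N a r \<subseteq> norm_cball N 0 (s + r)"
proof
  fix v assume "v \<in> norm_cball N a r"
  with assms show "v \<in> norm_cball N 0 (s + r)"
    using is_norm_triangle_diff[OF assms(1), of v a] by (simp add: norm_cball_def)
qed

lemma card_separated_le:
  fixes N :: "'a::euclidean_space \<Rightarrow> real"
  assumes N: "is_norm N" and "0 < \<epsilon>" and "finite A" and "A \<subseteq> norm_cball N 0 1"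
    and sep: "\<And>a b. a \<in> A \<Longrightarrow> b \<in> A \<Longrightarrow> a \<noteq> b \<Longrightarrow> \<epsilon> < N (a - b)"
  shows "real (card A) \<le> (1 + 2 / \<epsilon>) ^ DIM('a)"
proof -
  define \<rho> where "\<rho> = \<epsilon> / 2"
  have "0 < \<rho>" using \<open>0 < \<epsilon>\<close> by (simp add: \<rho>_def)
  define \<mu> where "\<mu> = measure lebesgue (norm_cball N 0 1)"
  have "0 < \<mu>" unfolding \<mu>_def by (rule measure_norm_cball_pos[OF N])
  have disj: "pairwise (\<lambda>a b. disjnt (norm_cball N a \<rho>) (norm_cball N b \<rho>)) A"
    using sep by (intro pairwiseI disjnt_norm_cball[OF N]) (simp add: \<rho>_def)
  have "(\<Union>a\<in>A. norm_cball N a \<rho>) \<subseteq> norm_cball N 0 (1 + \<rho>)"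
    using \<open>A \<subseteq> norm_cball N 0 1\<close> norm_cball_subset[OF N] by (force simp: norm_cball_def)
  have "real (card A) * (\<rho> ^ DIM('a) * \<mu>) = (\<Sum>a\<in>A. measure lebesgue (norm_cball N a \<rho>))"
    by (simp add: \<mu>_def measure_norm_cball[OF N \<open>0 < \<rho>\<close>])
  also have "\<dots> = measure lebesgue (\<Union>a\<in>A. norm_cball N a \<rho>)"
    by (rule measure_UNION'[OF \<open>finite A\<close> norm_cball_lmeasurable[OF N] disj, symmetric])
  also have "\<dots> \<le> measure lebesgue (norm_cball N 0 (1 + \<rho>))"
    using \<open>(\<Union>a\<in>A. norm_cball N a \<rho>) \<subseteq> norm_cball N 0 (1 + \<rho>)\<close>
    by (intro measure_mono_fmeasurable norm_cball_lmeasurable[OF N] fmeasurableD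
        fmeasurable.finite_UN \<open>finite A\<close>)
  also have "\<dots> = (1 + \<rho>) ^ DIM('a) * \<mu>"
    using \<open>0 < \<rho>\<close> by (simp add: \<mu>_def measure_norm_cball[OF N, of "1 + \<rho>"])
  finally have "real (card A) * \<rho> ^ DIM('a) \<le> (1 + \<rho>) ^ DIM('a)"
    using \<open>0 < \<mu>\<close> by (simp add: mult.assoc[symmetric] mult_le_cancel_right_pos)
  then have "real (card A) \<le> ((1 + \<rho>) / \<rho>) ^ DIM('a)"
    using \<open>0 < \<rho>\<close> by (simp add: power_divide field_simps)
  also have "(1 + \<rho>) / \<rho> = 1 + 2 / \<epsilon>"
    using \<open>0 < \<epsilon>\<close> by (simp add: \<rho>_def field_simps)
  finally show ?thesis .
qed

text \<open>A maximal \<open>\<epsilon>\<close>-separated subset of the unit ball is an \<open>\<epsilon>\<close>-net of it; maximal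
  separated sets exist because their cardinality is bounded by the volume argument.\<close>

lemma exists_finite_net:
  fixes N :: "'a::euclidean_space \<Rightarrow> real"
  assumes N: "is_norm N" and "0 < \<epsilon>"
  obtains C where "finite C" and "real (card C) \<le> (1 + 2 / \<epsilon>) ^ DIM('a)"
    and "\<And>w. N w \<le> 1 \<Longrightarrow> \<exists>c\<in>C. N (w - c) \<le> \<epsilon>"
proof -
  define sep where "sep A \<longleftrightarrow> finite A \<and> A \<subseteq> norm_cball N 0 1 \<and>
      (\<forall>a\<in>A. \<forall>b\<in>A. a \<noteq> b \<longrightarrow> \<epsilon> < N (a - b))" for A
  define K where "K = (1 + 2 / \<epsilon>) ^ DIM('a)"
  have card_le: "real (card A) \<le> K" if "sep A" for A
    using card_separated_le[OF N \<open>0 < \<epsilon>\<close>] that unfolding sep_def K_def by blast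
  have "card A < nat \<lceil>K\<rceil> + 1" if "sep A" for A
  proof -
    have "real (card A) \<le> real (nat \<lceil>K\<rceil>)"
      using card_le[OF that] real_nat_ceiling_ge[of K] by linarith
    then show ?thesis by simp
  qed
  then obtain A where A: "sep A" and max: "\<And>B. sep B \<Longrightarrow> card B \<le> card A"
    using ex_has_greatest_nat[of sep "{}" card "nat \<lceil>K\<rceil> + 1"] unfolding sep_def by auto
  have "\<exists>c\<in>A. N (w - c) \<le> \<epsilon>" if "N w \<le> 1" for w
  proof (rule ccontr)
    assume "\<not> ?thesis"
    then have far: "\<And>c. c \<in> A \<Longrightarrow> \<epsilon> < N (w - c)" by auto
    then have "w \<notin> A" using \<open>0 < \<epsilon>\<close> is_norm_zero[OF N] by force
    have "sep (insert w A)"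
      using A far that is_norm_commute[OF N] by (auto simp: sep_def norm_cball_def)
    then have "card (insert w A) \<le> card A" by (rule max)
    with \<open>w \<notin> A\<close> A show False by (simp add: sep_def)
  qed
  then show ?thesis using that A card_le unfolding sep_def K_def by blast
qed

section \<open>Hedge\<close>

lemma exp_neg_mult_le_chord:
  fixes u \<eta> :: real
  assumes "0 \<le> u" and "u \<le> 1"
  shows "exp (- \<eta> * u) \<le> 1 - u + u * exp (- \<eta>)"
  using convex_onD[OF convex_on_exp[of 1], of u 0 "- \<eta>"] assms by (simp add: mult.commute)

lemma ln_Bernoulli_mgf_le:
  fixes p \<eta> :: real
  assumes "0 \<le> p" and "p \<le> 1" and "0 \<le> \<eta>"
  shows "ln (1 - p + p * exp (- \<eta>)) \<le> - \<eta> * p + \<eta>\<^sup>2 / 8"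
proof -
  define Z where "Z = 1 + (1 - p) * (exp \<eta> - 1)"
  have "0 \<le> (1 - p) * (exp \<eta> - 1)"
    using assms by (intro mult_nonneg_nonneg) auto
  then have "0 < Z" by (simp add: Z_def)
  have "1 - p + p * exp (- \<eta>) = exp (- \<eta>) * Z"
    by (simp add: Z_def exp_minus field_simps)
  then have "ln (1 - p + p * exp (- \<eta>)) = - \<eta> + ln Z"
    using \<open>0 < Z\<close> by (simp add: ln_mult)
  moreover have "- \<eta> * (1 - p) + ln Z \<le> \<eta>\<^sup>2 / 8"
    unfolding Z_def by (rule Hoeffdings_lemma_aux) (use assms in auto)
  ultimately show ?thesis by (simp add: right_diff_distrib)
qed

definition hedge_weight :: "real \<Rightarrow> (nat \<Rightarrow> 'c \<Rightarrow> real) \<Rightarrow> nat \<Rightarrow> 'c \<Rightarrow> real" where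
  "hedge_weight \<eta> l t c = exp (- \<eta> * (\<Sum>s<t. l s c))"

definition hedge_loss :: "real \<Rightarrow> 'c set \<Rightarrow> (nat \<Rightarrow> 'c \<Rightarrow> real) \<Rightarrow> nat \<Rightarrow> real" where
  "hedge_loss \<eta> C l t = (\<Sum>c\<in>C. hedge_weight \<eta> l t c * l t c) / (\<Sum>c\<in>C. hedge_weight \<eta> l t c)"

lemma hedge_weight_pos: "0 < hedge_weight \<eta> l t c"
  by (simp add: hedge_weight_def)

lemma hedge_weight_nonneg: "0 \<le> hedge_weight \<eta> l t c"
  by (simp add: hedge_weight_def)

lemma hedge_weight_0 [simp]: "hedge_weight \<eta> l 0 c = 1"
  by (simp add: hedge_weight_def)

lemma hedge_weight_Suc: "hedge_weight \<eta> l (Suc t) c = hedge_weight \<eta> l t c * exp (- \<eta> * l t c)"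
  by (simp only: hedge_weight_def sum.lessThan_Suc distrib_left exp_add)

lemma hedge_loss_bounds:
  assumes "\<And>c. c \<in> C \<Longrightarrow> 0 \<le> l t c \<and> l t c \<le> 1"
  shows "0 \<le> hedge_loss \<eta> C l t \<and> hedge_loss \<eta> C l t \<le> 1"
proof -
  define S where "S = (\<Sum>c\<in>C. hedge_weight \<eta> l t c * l t c)"
  define W where "W = (\<Sum>c\<in>C. hedge_weight \<eta> l t c)"
  have "0 \<le> S"
    unfolding S_def using assms by (intro sum_nonneg mult_nonneg_nonneg hedge_weight_nonneg) auto
  moreover have "S \<le> W"
    unfolding S_def W_def using assms by (intro sum_mono mult_left_le hedge_weight_nonneg) auto
  ultimately have "0 \<le> S / W \<and> S / W \<le> 1"
    by (cases "W = 0") (simp_all add: divide_le_eq_1)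
  then show ?thesis
    by (simp add: hedge_loss_def S_def W_def)
qed

lemma hedge_weight_sum_Suc_le:
  assumes "finite C" and "C \<noteq> {}" and "\<And>c. c \<in> C \<Longrightarrow> 0 \<le> l t c \<and> l t c \<le> 1"
  shows "(\<Sum>c\<in>C. hedge_weight \<eta> l (Suc t) c)
    \<le> (\<Sum>c\<in>C. hedge_weight \<eta> l t c) * (1 - hedge_loss \<eta> C l t + hedge_loss \<eta> C l t * exp (- \<eta>))"
proof -
  define W where "W = (\<Sum>c\<in>C. hedge_weight \<eta> l t c)"
  define S where "S = (\<Sum>c\<in>C. hedge_weight \<eta> l t c * l t c)"
  have "0 < W"
    unfolding W_def using assms(1,2) hedge_weight_pos by (intro sum_pos)
  have "(\<Sum>c\<in>C. hedge_weight \<eta> l (Suc t) c)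
      \<le> (\<Sum>c\<in>C. hedge_weight \<eta> l t c * (1 - l t c + l t c * exp (- \<eta>)))"
    unfolding hedge_weight_Suc using assms(3)
    by (intro sum_mono mult_left_mono exp_neg_mult_le_chord hedge_weight_nonneg) auto
  also have "\<dots> = W - (1 - exp (- \<eta>)) * S"
    by (simp add: W_def S_def algebra_simps sum_subtractf sum_distrib_left sum.distrib)
  also have "\<dots> = W * (1 - S / W + S / W * exp (- \<eta>))"
    using \<open>0 < W\<close> by (simp add: field_simps)
  finally show ?thesis by (simp add: W_def S_def hedge_loss_def)
qed

lemma hedge_log_potential:
  assumes "finite C" and "C \<noteq> {}" and "0 \<le> \<eta>"
    and loss: "\<And>t c. c \<in> C \<Longrightarrow> 0 \<le> l t c \<and> l t c \<le> 1"
  shows "ln (\<Sum>c\<in>C. hedge_weight \<eta> l t c)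
    \<le> ln (card C) - \<eta> * (\<Sum>s<t. hedge_loss \<eta> C l s) + t * \<eta>\<^sup>2 / 8"
proof (induction t)
  case (Suc t)
  define p where "p = hedge_loss \<eta> C l t"
  have "0 \<le> p \<and> p \<le> 1"
    unfolding p_def by (rule hedge_loss_bounds) (rule loss)
  then have p: "0 \<le> p" "p \<le> 1" by auto
  have "0 < exp (- \<eta>) + (1 - p) * (1 - exp (- \<eta>))"
    using p \<open>0 \<le> \<eta>\<close> by (intro add_pos_nonneg) auto
  then have m: "0 < 1 - p + p * exp (- \<eta>)"
    by (simp add: algebra_simps)
  have W: "0 < (\<Sum>c\<in>C. hedge_weight \<eta> l t c)" "0 < (\<Sum>c\<in>C. hedge_weight \<eta> l (Suc t) c)"
    using assms(1,2) by (auto intro!: sum_pos hedge_weight_pos)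
  have "(\<Sum>c\<in>C. hedge_weight \<eta> l (Suc t) c)
      \<le> (\<Sum>c\<in>C. hedge_weight \<eta> l t c) * (1 - p + p * exp (- \<eta>))"
    unfolding p_def by (rule hedge_weight_sum_Suc_le[OF assms(1,2)]) (rule loss)
  then have "ln (\<Sum>c\<in>C. hedge_weight \<eta> l (Suc t) c)
      \<le> ln ((\<Sum>c\<in>C. hedge_weight \<eta> l t c) * (1 - p + p * exp (- \<eta>)))"
    using W(2) mult_pos_pos[OF W(1) m] by simp
  also have "\<dots> = ln (\<Sum>c\<in>C. hedge_weight \<eta> l t c) + ln (1 - p + p * exp (- \<eta>))"
    using W(1) m by (simp add: ln_mult)
  also have "\<dots> \<le> ln (\<Sum>c\<in>C. hedge_weight \<eta> l t c) - \<eta> * p + \<eta>\<^sup>2 / 8"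
    using ln_Bernoulli_mgf_le[OF p \<open>0 \<le> \<eta>\<close>] by simp
  also have "\<dots> \<le> ln (card C) - \<eta> * (\<Sum>s<Suc t. hedge_loss \<eta> C l s) + Suc t * \<eta>\<^sup>2 / 8"
  proof -
    have "\<eta> * (\<Sum>s<Suc t. hedge_loss \<eta> C l s) = \<eta> * (\<Sum>s<t. hedge_loss \<eta> C l s) + \<eta> * p"
      by (simp add: p_def distrib_left)
    moreover have "real (Suc t) * \<eta>\<^sup>2 / 8 = real t * \<eta>\<^sup>2 / 8 + \<eta>\<^sup>2 / 8"
      by (simp add: field_simps)
    ultimately show ?thesis
      using Suc.IH by linarith
  qed
  finally show ?case .
qed simp

theorem hedge_regret:
  assumes "finite C" and "c \<in> C" and "0 < \<eta>"
    and loss: "\<And>t c. c \<in> C \<Longrightarrow> 0 \<le> l t c \<and> l t c \<le> 1"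
  shows "(\<Sum>t<T. hedge_loss \<eta> C l t) \<le> (\<Sum>t<T. l t c) + ln (card C) / \<eta> + \<eta> * T / 8"
proof -
  have "- \<eta> * (\<Sum>t<T. l t c) = ln (hedge_weight \<eta> l T c)"
    by (simp add: hedge_weight_def)
  also have "\<dots> \<le> ln (\<Sum>c\<in>C. hedge_weight \<eta> l T c)"
    using member_le_sum[of c C "hedge_weight \<eta> l T"] assms(1,2) hedge_weight_pos[of \<eta> l T c]
    by (simp add: hedge_weight_nonneg)
  also have "\<dots> \<le> ln (card C) - \<eta> * (\<Sum>t<T. hedge_loss \<eta> C l t) + T * \<eta>\<^sup>2 / 8"
    using assms by (intro hedge_log_potential) auto
  finally have "- \<eta> * (\<Sum>t<T. l t c)
      \<le> ln (card C) - \<eta> * (\<Sum>t<T. hedge_loss \<eta> C l t) + T * \<eta>\<^sup>2 / 8" .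
  moreover have "T * \<eta>\<^sup>2 / 8 = \<eta> * (\<eta> * T / 8)"
    by (simp add: power2_eq_square)
  ultimately have "\<eta> * (\<Sum>t<T. hedge_loss \<eta> C l t)
      \<le> \<eta> * (\<Sum>t<T. l t c) + ln (card C) + \<eta> * (\<eta> * T / 8)"
    by linarith
  also have "\<dots> = \<eta> * ((\<Sum>t<T. l t c) + ln (card C) / \<eta> + \<eta> * T / 8)"
    using \<open>0 < \<eta>\<close> by (simp add: distrib_left)
  finally show ?thesis
    using \<open>0 < \<eta>\<close> by simp
qed

section \<open>Learning with a margin\<close>

definition expert_loss :: "'a::real_inner \<Rightarrow> 'a \<Rightarrow> real \<Rightarrow> real" where
  "expert_loss c z y = (if (y = 1) = (0 < inner c z) then 0 else 1)"

lemma expert_loss_bounds: "0 \<le> expert_loss c z y \<and> expert_loss c z y \<le> 1"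
  by (simp add: expert_loss_def)

definition hedge_learner :: "'a::real_inner set \<Rightarrow> real \<Rightarrow> ('a \<times> real) list \<Rightarrow> 'a \<Rightarrow> real" where
  "hedge_learner C \<eta> h z =
     (let v = (\<lambda>c. exp (- \<eta> * (\<Sum>(x, y)\<leftarrow>h. expert_loss c x y)))
      in (\<Sum>c\<in>{c \<in> C. 0 < inner c z}. v c) / (\<Sum>c\<in>C. v c))"

lemma hedge_learner_bounds: "0 \<le> hedge_learner C \<eta> h z \<and> hedge_learner C \<eta> h z \<le> 1"
proof (cases "finite C")
  case True
  define v where "v c = exp (- \<eta> * (\<Sum>(x, y)\<leftarrow>h. expert_loss c x y))" for c
  have "(\<Sum>c\<in>{c \<in> C. 0 < inner c z}. v c) \<le> (\<Sum>c\<in>C. v c)"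
    using True by (intro sum_mono2) (auto simp: v_def)
  moreover have "0 \<le> (\<Sum>c\<in>{c \<in> C. 0 < inner c z}. v c)"
    by (intro sum_nonneg) (simp add: v_def)
  ultimately show ?thesis
    by (cases "(\<Sum>c\<in>C. v c) = 0") (simp_all add: hedge_learner_def Let_def v_def divide_le_eq_1)
qed (simp add: hedge_learner_def)

lemma expected_mistakes_hedge_learner:
  assumes "finite C" and "C \<noteq> {}"
  shows "expected_mistakes (hedge_learner C \<eta>) T x y
    = (\<Sum>t<T. hedge_loss \<eta> C (\<lambda>s c. expert_loss c (x s) (y s)) t)"
  unfolding expected_mistakes_def
proof (intro sum.cong refl)
  fix t
  let ?l = "\<lambda>s c. expert_loss c (x s) (y s)"
  define W where "W = (\<Sum>c\<in>C. hedge_weight \<eta> ?l t c)"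
  define P where "P = (\<Sum>c\<in>{c \<in> C. 0 < inner c (x t)}. hedge_weight \<eta> ?l t c)"
  have "0 < W"
    unfolding W_def using assms by (intro sum_pos hedge_weight_pos)
  have "(\<Sum>(x, y)\<leftarrow>map (\<lambda>s. (x s, y s)) [0..<t]. expert_loss c x y) = (\<Sum>s<t. ?l s c)" for c
    by (simp add: comp_def sum_list_sum_nth atLeast0LessThan)
  then have learner: "hedge_learner C \<eta> (map (\<lambda>s. (x s, y s)) [0..<t]) (x t) = P / W"
    by (simp add: hedge_learner_def Let_def P_def W_def hedge_weight_def)
  have "(\<Sum>c\<in>C. hedge_weight \<eta> ?l t c * ?l t c)
      = (\<Sum>c\<in>C. if (y t = 1) = (0 < inner c (x t)) then 0 else hedge_weight \<eta> ?l t c)"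
    by (intro sum.cong refl) (simp add: expert_loss_def)
  also have "\<dots> = (if y t = 1 then W - P else P)"
  proof (cases "y t = 1")
    case True
    have "(\<Sum>c\<in>C. if 0 < inner c (x t) then 0 else hedge_weight \<eta> ?l t c)
        = (\<Sum>c\<in>C. hedge_weight \<eta> ?l t c - (if 0 < inner c (x t) then hedge_weight \<eta> ?l t c else 0))"
      by (intro sum.cong) auto
    with True assms(1) show ?thesis
      by (simp add: W_def P_def sum_subtractf sum.inter_filter)
  next
    case False
    with assms(1) show ?thesis
      by (auto simp: P_def sum.inter_filter intro!: sum.cong)
  qed
  finally show "(let p = hedge_learner C \<eta> (map (\<lambda>s. (x s, y s)) [0..<t]) (x t)
      in if y t = 1 then 1 - p else p) = hedge_loss \<eta> C ?l t"
    using \<open>0 < W\<close> by (simp add: learner hedge_loss_def W_def diff_divide_distrib)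
qed

lemma expert_loss_le_margin_error:
  assumes "y \<in> {-1, 1}" and "\<bar>inner (w - c) z\<bar> \<le> \<gamma>"
  shows "expert_loss c z y \<le> (if y * inner w z \<le> \<gamma> then 1 else 0)"
proof (cases "y * inner w z \<le> \<gamma>")
  case False
  have "y * inner c z = y * inner w z - y * inner (w - c) z"
    by (simp add: inner_diff_left algebra_simps)
  moreover have "y * inner (w - c) z \<le> \<gamma>"
    using assms by auto
  ultimately have "0 < y * inner c z"
    using False by linarith
  with assms(1) False show ?thesis
    by (auto simp: expert_loss_def zero_less_mult_iff)
qed (simp add: expert_loss_def)

lemma sum_expert_loss_le_margin_errors:
  assumes "\<And>t. t < T \<Longrightarrow> y t \<in> {-1, 1} \<and> \<bar>inner (w - c) (x t)\<bar> \<le> \<gamma>"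
  shows "(\<Sum>t<T. expert_loss c (x t) (y t)) \<le> real (margin_errors \<gamma> T x y w)"
proof -
  have "(\<Sum>t<T. expert_loss c (x t) (y t)) \<le> (\<Sum>t<T. if y t * inner w (x t) \<le> \<gamma> then 1 else 0)"
    using assms by (intro sum_mono expert_loss_le_margin_error) auto
  also have "\<dots> = real (card {t \<in> {..<T}. y t * inner w (x t) \<le> \<gamma>})"
    by (simp add: sum.inter_filter[symmetric])
  finally show ?thesis
    by (simp add: margin_errors_def conj_commute lessThan_def)
qed

lemma hedge_learner_regret:
  assumes "finite C" and "c \<in> C" and "0 < \<eta>"
    and "\<And>t. t < T \<Longrightarrow> y t \<in> {-1, 1} \<and> \<bar>inner (w - c) (x t)\<bar> \<le> \<gamma>"
  shows "expected_mistakes (hedge_learner C \<eta>) T x y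
    \<le> margin_errors \<gamma> T x y w + ln (card C) / \<eta> + \<eta> * T / 8"
proof -
  have "expected_mistakes (hedge_learner C \<eta>) T x y
      = (\<Sum>t<T. hedge_loss \<eta> C (\<lambda>s c. expert_loss c (x s) (y s)) t)"
    using assms(1,2) by (intro expected_mistakes_hedge_learner) auto
  also have "\<dots> \<le> (\<Sum>t<T. expert_loss c (x t) (y t)) + ln (card C) / \<eta> + \<eta> * T / 8"
    using assms(1-3) expert_loss_bounds by (rule hedge_regret)
  moreover have "(\<Sum>t<T. expert_loss c (x t) (y t)) \<le> real (margin_errors \<gamma> T x y w)"
    by (rule sum_expert_loss_le_margin_errors) (rule assms(4))
  ultimately show ?thesis
    by linarith
qed

lemma exists_learning_rate:
  fixes T A L :: real
  assumes "0 < T" and "0 < A" and "L \<le> A"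
  obtains \<eta> where "0 < \<eta>" and "L / \<eta> + \<eta> * T / 8 \<le> sqrt (T * A)"
proof -
  define r where "r = sqrt (T * A)"
  have "0 < r" and r2: "r * r = T * A"
    using assms by (simp_all add: r_def)
  define \<eta> where "\<eta> = 4 * r / T"
  have "0 < \<eta>"
    using \<open>0 < r\<close> \<open>0 < T\<close> by (simp add: \<eta>_def)
  have "L / \<eta> \<le> A / \<eta>"
    using \<open>0 < \<eta>\<close> assms(3) by (simp add: divide_right_mono)
  also have "A / \<eta> = r / 4"
    using \<open>0 < r\<close> \<open>0 < T\<close> r2 by (simp add: \<eta>_def field_simps)
  finally have "L / \<eta> + \<eta> * T / 8 \<le> r / 4 + r / 2"
    using \<open>0 < T\<close> by (simp add: \<eta>_def)
  also have "\<dots> \<le> r"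
    using \<open>0 < r\<close> by simp
  finally show ?thesis
    unfolding r_def by (rule that[OF \<open>0 < \<eta>\<close>])
qed

lemma exists_dual_norm_net:
  fixes N :: "'a::euclidean_space \<Rightarrow> real"
  assumes N: "is_norm N" and "0 < B" and "0 < \<gamma>"
  obtains C where "finite C" and "C \<noteq> {}" and "ln (card C) \<le> DIM('a) * ln (1 + 2 * B / \<gamma>)"
    and "\<And>w. dual_norm N w \<le> 1 \<Longrightarrow> \<exists>c\<in>C. dual_norm N (w - c) \<le> \<gamma> / B"
proof -
  have D: "is_norm (dual_norm N)"
    by (rule is_norm_dual_norm[OF N])
  have "0 < \<gamma> / B"
    using assms by simp
  then obtain C where "finite C" and card: "real (card C) \<le> (1 + 2 / (\<gamma> / B)) ^ DIM('a)"
    and net: "\<And>w. dual_norm N w \<le> 1 \<Longrightarrow> \<exists>c\<in>C. dual_norm N (w - c) \<le> \<gamma> / B"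
    using exists_finite_net[OF D] by blast
  have "C \<noteq> {}"
    using net[of 0] is_norm_zero[OF D] by auto
  then have "ln (card C) \<le> ln ((1 + 2 * B / \<gamma>) ^ DIM('a))"
    using card \<open>finite C\<close> by (intro ln_mono) (simp_all add: card_gt_0_iff)
  also have "\<dots> = DIM('a) * ln (1 + 2 * B / \<gamma>)"
    using assms by (simp add: ln_realpow add_pos_nonneg)
  finally show ?thesis
    using that \<open>finite C\<close> \<open>C \<noteq> {}\<close> net by blast
qed

lemma exists_learner_margin_regret:
  fixes N :: "'a::euclidean_space \<Rightarrow> real"
  assumes N: "is_norm N" and X: "\<And>z. z \<in> X \<Longrightarrow> N z \<le> B"
    and "0 < B" and "0 < \<gamma>" and "0 < T"
  obtains q :: "('a \<times> real) list \<Rightarrow> 'a \<Rightarrow> real"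
  where "\<And>h z. 0 \<le> q h z \<and> q h z \<le> 1"
    and "\<And>x y w. \<forall>t<T. x t \<in> X \<and> y t \<in> {-1, 1} \<Longrightarrow> dual_norm N w \<le> 1 \<Longrightarrow>
      expected_mistakes q T x y \<le> margin_errors \<gamma> T x y w + sqrt (real T * real DIM('a) * ln (1 + 2 * B / \<gamma>))"
proof -
  define L where "L = DIM('a) * ln (1 + 2 * B / \<gamma>)"
  obtain C where "finite C" and "C \<noteq> {}" and "ln (card C) \<le> L"
    and net: "\<And>w. dual_norm N w \<le> 1 \<Longrightarrow> \<exists>c\<in>C. dual_norm N (w - c) \<le> \<gamma> / B"
    using exists_dual_norm_net[OF N \<open>0 < B\<close> \<open>0 < \<gamma>\<close>] unfolding L_def by blast
  moreover have "0 < L"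
    unfolding L_def using assms by (intro mult_pos_pos ln_gt_zero) auto
  ultimately obtain \<eta> :: real
    where "0 < \<eta>" and rate: "ln (card C) / \<eta> + \<eta> * T / 8 \<le> sqrt (T * L)"
    using exists_learning_rate[of "real T" L "ln (card C)"] \<open>0 < T\<close> by auto
  show ?thesis
  proof (rule that[of "hedge_learner C \<eta>"])
    show "0 \<le> hedge_learner C \<eta> h z \<and> hedge_learner C \<eta> h z \<le> 1" for h z
      by (rule hedge_learner_bounds)
    fix x :: "nat \<Rightarrow> 'a" and y :: "nat \<Rightarrow> real" and w :: 'a
    assume adm: "\<forall>t<T. x t \<in> X \<and> y t \<in> {-1, 1}" and "dual_norm N w \<le> 1"
    then obtain c where "c \<in> C" and c: "dual_norm N (w - c) \<le> \<gamma> / B"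
      using net by blast
    have "\<bar>inner (w - c) (x t)\<bar> \<le> \<gamma>" if "t < T" for t
    proof -
      have "\<bar>inner (w - c) (x t)\<bar> \<le> dual_norm N (w - c) * N (x t)"
        by (rule abs_inner_le_dual_norm_mult[OF N])
      also have "\<dots> \<le> \<gamma> / B * B"
        using adm that c X is_normD(1)[OF N] \<open>0 < B\<close> \<open>0 < \<gamma>\<close> by (intro mult_mono) auto
      finally show ?thesis
        using \<open>0 < B\<close> by simp
    qed
    then have "expected_mistakes (hedge_learner C \<eta>) T x y
        \<le> margin_errors \<gamma> T x y w + ln (card C) / \<eta> + \<eta> * T / 8"
      using adm by (intro hedge_learner_regret[OF \<open>finite C\<close> \<open>c \<in> C\<close> \<open>0 < \<eta>\<close>]) auto
    with rate show "expected_mistakes (hedge_learner C \<eta>) T x y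
        \<le> margin_errors \<gamma> T x y w + sqrt (real T * real DIM('a) * ln (1 + 2 * B / \<gamma>))"
      by (simp add: L_def mult.assoc)
  qed
qed

lemma expected_mistakes_le:
  assumes "\<And>h z. 0 \<le> q h z \<and> q h z \<le> 1"
  shows "expected_mistakes q T x y \<le> T"
proof -
  have "expected_mistakes q T x y \<le> (\<Sum>t<T. 1)"
    unfolding expected_mistakes_def using assms by (intro sum_mono) (auto simp: Let_def)
  then show ?thesis by simp
qed

lemma margin_errors_le: "margin_errors \<gamma> T x y w \<le> T"
proof -
  have "card {t. t < T \<and> y t * inner w (x t) \<le> \<gamma>} \<le> card {..<T}"
    by (intro card_mono) auto
  then show ?thesis
    by (simp add: margin_errors_def)
qed

lemma margin_errors_eq_if_zero:
  assumes "0 \<le> \<gamma>" and "\<And>t. t < T \<Longrightarrow> x t = 0"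
  shows "margin_errors \<gamma> T x y w = T"
proof -
  have "{t. t < T \<and> y t * inner w (x t) \<le> \<gamma>} = {..<T}"
    using assms by auto
  then show ?thesis by (simp add: margin_errors_def)
qed

lemma diff_Min_margin_errors_le:
  fixes E R :: real
  assumes "\<exists>w. P w" and "\<And>w. P w \<Longrightarrow> E \<le> margin_errors \<gamma> T x y w + R"
  shows "E - real (Min {margin_errors \<gamma> T x y w | w. P w}) \<le> R"
proof -
  let ?S = "{margin_errors \<gamma> T x y w | w. P w}"
  have "?S \<subseteq> {..T}"
    using margin_errors_le by auto
  then have "finite ?S"
    by (rule finite_subset) simp
  moreover have "?S \<noteq> {}"
    using assms(1) by blast
  ultimately have "Min ?S \<in> ?S"
    by (rule Min_in)
  then obtain w where "P w" and "Min ?S = margin_errors \<gamma> T x y w"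
    by blast
  with assms(2) show ?thesis
    by fastforce
qed

lemma constant_learner_regret_degenerate:
  fixes d :: real
  assumes N: "is_norm N" and X: "\<And>z. z \<in> X \<Longrightarrow> N z \<le> B" and "0 \<le> \<gamma>"
    and "\<not> (0 < T \<and> 0 < B)" and adm: "\<forall>t<T. x t \<in> X"
  shows "expected_mistakes (\<lambda>_ _. 0) T x y \<le> margin_errors \<gamma> T x y w + sqrt (T * d * ln (1 + 2 * B / \<gamma>))"
proof (cases "T = 0")
  case False
  have zero: "x t = 0 \<and> B = 0" if "t < T" for t
  proof -
    have "0 \<le> N (x t)" and "N (x t) \<le> B"
      using adm that X is_normD(1)[OF N] by auto
    moreover have "B \<le> 0"
      using assms(4) that by auto
    ultimately show ?thesis
      using is_normD(2)[OF N, of "x t"] by auto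
  qed
  then have "B = 0"
    using False by blast
  have "margin_errors \<gamma> T x y w = T"
    using \<open>0 \<le> \<gamma>\<close> zero by (intro margin_errors_eq_if_zero) auto
  then have "expected_mistakes (\<lambda>_ _. 0) T x y \<le> margin_errors \<gamma> T x y w"
    using expected_mistakes_le[of "\<lambda>_ _. 0" T x y] by simp
  with \<open>B = 0\<close> show ?thesis
    by simp
qed (simp add: expected_mistakes_def)

theorem theorem14:
  fixes N :: "real ^ 'd \<Rightarrow> real"
    and X :: "(real ^ 'd) set"
    and \<gamma> :: real
    and T :: nat
  assumes "is_norm N"
    and "bdd_above (N ` X)"
    and "\<gamma> > 0"
  shows "\<exists>q :: ((real ^ 'd) \<times> real) list \<Rightarrow> real ^ 'd \<Rightarrow> real.
           (\<forall>h z. 0 \<le> q h z \<and> q h z \<le> 1) \<and>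
           (\<forall>x :: nat \<Rightarrow> real ^ 'd. \<forall>y :: nat \<Rightarrow> real.
              (\<forall>t<T. x t \<in> X \<and> y t \<in> {-1, 1}) \<longrightarrow>
              expected_mistakes q T x y
                - real (Min {margin_errors \<gamma> T x y w | w. dual_norm N w = 1})
              \<le> sqrt (real T * real CARD('d) * ln (1 + 2 * Sup (N ` X) / \<gamma>)))"
proof -
  define B where "B = Sup (N ` X)"
  have NB: "N z \<le> B" if "z \<in> X" for z
    using assms(2) that by (simp add: B_def cSup_upper)
  have unit: "\<exists>w. dual_norm N w = 1"
    using is_norm_exists_unit[OF is_norm_dual_norm[OF assms(1)]] by metis
  obtain q :: "((real ^ 'd) \<times> real) list \<Rightarrow> real ^ 'd \<Rightarrow> real"
    where q: "\<And>h z. 0 \<le> q h z \<and> q h z \<le> 1"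
      and regret: "\<And>x y w. \<forall>t<T. x t \<in> X \<and> y t \<in> {-1, 1} \<Longrightarrow> dual_norm N w \<le> 1 \<Longrightarrow>
        expected_mistakes q T x y \<le> margin_errors \<gamma> T x y w + sqrt (real T * real CARD('d) * ln (1 + 2 * B / \<gamma>))"
  proof (cases "0 < T \<and> 0 < B")
    case True
    then show ?thesis
      using that exists_learner_margin_regret[OF assms(1) NB _ assms(3), where T = T] by auto
  next
    case False
    then show ?thesis
      using that[of "\<lambda>_ _. 0"] constant_learner_regret_degenerate[OF assms(1) NB] assms(3) by auto
  qed
  show ?thesis
  proof (intro exI[of _ q] conjI allI impI)
    fix x :: "nat \<Rightarrow> real ^ 'd" and y :: "nat \<Rightarrow> real"
    assume "\<forall>t<T. x t \<in> X \<and> y t \<in> {-1, 1}"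
    then have "expected_mistakes q T x y
        \<le> margin_errors \<gamma> T x y w + sqrt (real T * real CARD('d) * ln (1 + 2 * B / \<gamma>))"
      if "dual_norm N w = 1" for w
      using regret that by simp
    then show "expected_mistakes q T x y - real (Min {margin_errors \<gamma> T x y w | w. dual_norm N w = 1})
        \<le> sqrt (real T * real CARD('d) * ln (1 + 2 * Sup (N ` X) / \<gamma>))"
      unfolding B_def by (rule diff_Min_margin_errors_le[OF unit])
  qed (use q in auto)
qed

end
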